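(* Under the same setting (with $d>k\geq1$, $\varepsilon\in(0,1)$, $A\succeq0$ symmetric with $\lambda_k>\lambda_{k+1}$, $\beta>0$ with $\lambda_k>2\sqrt\beta\geq\lambda_{k+1}$, $X_0\in\mathrm{St}(d,k)$ with $\cos\theta_k(U_k,X_0)>0$, and ANPM perturbations satisfying for all $t\geq0$: $\|U_{-k}^\top\Xi_t\|_2\leq c(\lambda_k-2\sqrt\beta)\varepsilon$ and $\|U_k^\top\Xi_t\|_2\leq c(\lambda_k-2\sqrt\beta)\cos\theta_k(U_k,X_t)$, $c=1/32$), for all $t\geq0$, $$H_t=p_t(\Lambda_{-k})H_0C_t^{-1}+\sum_{s=0}^{t-1}q_s(\Lambda_{-k})\Psi_{t-1-s}C_{t-1-s}C_t^{-1}.$$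
   Context: $A$ has eigenvalues $\lambda_1\geq\dots\geq\lambda_d\geq0$, orthonormal eigenvectors $u_i$; $U_k:=[u_1..u_k]$, $U_{-k}:=[u_{k+1}..u_d]$, $\Lambda_k:=\mathrm{diag}(\lambda_1..\lambda_k)$, $\Lambda_{-k}:=\mathrm{diag}(\lambda_{k+1}..\lambda_d)$. QR: $Y=XR$, $X^\top X=I_k$, $R$ upper triangular, nonnegative diagonal; $\theta_k(U,X):=\arccos\sigma_{\min}(U^\top X)$. ANPM: $(X_1,R_1)=\mathrm{QR}(\tfrac12AX_0+\Xi_0)$; for $t\geq1$, $Y_{t+1}=AX_t-\beta X_{t-1}R_t^{-1}+\Xi_t$, $(X_{t+1},R_{t+1})=\mathrm{QR}(Y_{t+1})$. $H_t:=(U_{-k}^\top X_t)(U_k^\top X_t)^{-1}$; $\Psi_t:=(U_{-k}^\top\Xi_t)(U_k^\top X_t)^{-1}$; $E_t:=\Lambda_k^{-1}(U_k^\top\Xi_t)(U_k^\top X_t)^{-1}$; $G_0:=(I_k/2+E_0)^{-1}$, $G_{t+1}:=(I_k-\beta\Lambda_k^{-1}G_t\Lambda_k^{-1}+E_{t+1})^{-1}$; $C_0:=I_k$, $C_t:=\Lambda_kG_{t-1}^{-1}\Lambda_kG_{t-2}^{-1}\cdots\Lambda_kG_0^{-1}$. Polynomials: $p_0=1$, $p_1(x)=x/2$, $p_{t+1}(x)=xp_t(x)-\beta p_{t-1}(x)$; $q_0=1$, $q_1(x)=x$, $q_{t+1}(x)=xq_t(x)-\beta q_{t-1}(x)$.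 *)

theory Defs
  imports Complex_Main "HOL-Computational_Algebra.Polynomial" "Jordan_Normal_Form.Matrix"
begin

definition vnorm :: "real vec \<Rightarrow> real" where
  "vnorm v = sqrt (v \<bullet> v)"

definition spec_norm :: "real mat \<Rightarrow> real" where
  "spec_norm M = Sup {vnorm (M *\<^sub>v x) | x. x \<in> carrier_vec (dim_col M) \<and> vnorm x = 1}"

definition sigma_min :: "real mat \<Rightarrow> real" where
  "sigma_min M = Inf {vnorm (M *\<^sub>v x) | x. x \<in> carrier_vec (dim_col M) \<and> vnorm x = 1}"

definition theta_k :: "real mat \<Rightarrow> real mat \<Rightarrow> real" where
  "theta_k U X = arccos (sigma_min (transpose_mat U * X))"

definition minv :: "real mat \<Rightarrow> real mat" where
  "minv M = (SOME B. B \<in> carrier_mat (dim_col M) (dim_row M) \<and> inverts_mat M B \<and> inverts_mat B M)"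

definition stiefel :: "nat \<Rightarrow> nat \<Rightarrow> real mat set" where
  "stiefel d k = {X. X \<in> carrier_mat d k \<and> transpose_mat X * X = 1\<^sub>m k}"

definition is_QR :: "real mat \<Rightarrow> real mat \<Rightarrow> real mat \<Rightarrow> bool" where
  "is_QR Y Q R \<longleftrightarrow> Q \<in> carrier_mat (dim_row Y) (dim_col Y) \<and> R \<in> carrier_mat (dim_col Y) (dim_col Y)
     \<and> Y = Q * R \<and> transpose_mat Q * Q = 1\<^sub>m (dim_col Y) \<and> upper_triangular R
     \<and> (\<forall>i < dim_col Y. R $$ (i,i) \<ge> 0)"

definition poly_mat :: "nat \<Rightarrow> real poly \<Rightarrow> real mat \<Rightarrow> real mat" where
  "poly_mat n p M = mat n n (\<lambda>(i,j). \<Sum>l\<le>degree p. coeff p l * (M ^\<^sub>m l) $$ (i,j))"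

definition msum :: "nat \<Rightarrow> nat \<Rightarrow> (nat \<Rightarrow> real mat) \<Rightarrow> nat \<Rightarrow> real mat" where
  "msum nr nc f t = mat nr nc (\<lambda>(i,j). \<Sum>s<t. f s $$ (i,j))"

fun pP :: "real \<Rightarrow> nat \<Rightarrow> real poly" where
  "pP \<beta> 0 = 1"
| "pP \<beta> (Suc 0) = [:0, 1/2:]"
| "pP \<beta> (Suc (Suc t)) = [:0, 1:] * pP \<beta> (Suc t) - Polynomial.smult \<beta> (pP \<beta> t)"

fun qP :: "real \<Rightarrow> nat \<Rightarrow> real poly" where
  "qP \<beta> 0 = 1"
| "qP \<beta> (Suc 0) = [:0, 1:]"
| "qP \<beta> (Suc (Suc t)) = [:0, 1:] * qP \<beta> (Suc t) - Polynomial.smult \<beta> (qP \<beta> t)"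

definition Ufst :: "real mat \<Rightarrow> nat \<Rightarrow> real mat" where
  "Ufst U k = mat (dim_row U) k (\<lambda>(i,j). U $$ (i,j))"

definition Urest :: "real mat \<Rightarrow> nat \<Rightarrow> real mat" where
  "Urest U k = mat (dim_row U) (dim_col U - k) (\<lambda>(i,j). U $$ (i, j + k))"

(* Lambda_k = diag(lambda_1..lambda_k), Lambda_{-k} = diag(lambda_{k+1}..lambda_d);
   eigenvalues are 0-indexed: lam i = lambda_{i+1} *)
definition Lfst :: "(nat \<Rightarrow> real) \<Rightarrow> nat \<Rightarrow> real mat" where
  "Lfst lam k = mat_diag k lam"

definition Lrest :: "(nat \<Rightarrow> real) \<Rightarrow> nat \<Rightarrow> nat \<Rightarrow> real mat" where
  "Lrest lam d k = mat_diag (d - k) (\<lambda>i. lam (i + k))"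

definition Hm :: "real mat \<Rightarrow> nat \<Rightarrow> (nat \<Rightarrow> real mat) \<Rightarrow> nat \<Rightarrow> real mat" where
  "Hm U k X t = (transpose_mat (Urest U k) * X t) * minv (transpose_mat (Ufst U k) * X t)"

definition Psim :: "real mat \<Rightarrow> nat \<Rightarrow> (nat \<Rightarrow> real mat) \<Rightarrow> (nat \<Rightarrow> real mat) \<Rightarrow> nat \<Rightarrow> real mat" where
  "Psim U k X Xi t = (transpose_mat (Urest U k) * Xi t) * minv (transpose_mat (Ufst U k) * X t)"

definition Em :: "real mat \<Rightarrow> (nat \<Rightarrow> real) \<Rightarrow> nat \<Rightarrow> (nat \<Rightarrow> real mat) \<Rightarrow> (nat \<Rightarrow> real mat) \<Rightarrow> nat \<Rightarrow> real mat" where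
  "Em U lam k X Xi t = minv (Lfst lam k) * (transpose_mat (Ufst U k) * Xi t) * minv (transpose_mat (Ufst U k) * X t)"

fun Gm :: "real mat \<Rightarrow> (nat \<Rightarrow> real) \<Rightarrow> nat \<Rightarrow> real \<Rightarrow> (nat \<Rightarrow> real mat) \<Rightarrow> (nat \<Rightarrow> real mat) \<Rightarrow> nat \<Rightarrow> real mat" where
  "Gm U lam k \<beta> X Xi 0 = minv ((1/2) \<cdot>\<^sub>m 1\<^sub>m k + Em U lam k X Xi 0)"
| "Gm U lam k \<beta> X Xi (Suc t) =
     minv (1\<^sub>m k - \<beta> \<cdot>\<^sub>m (minv (Lfst lam k) * Gm U lam k \<beta> X Xi t * minv (Lfst lam k)) + Em U lam k X Xi (Suc t))"

fun Cm :: "real mat \<Rightarrow> (nat \<Rightarrow> real) \<Rightarrow> nat \<Rightarrow> real \<Rightarrow> (nat \<Rightarrow> real mat) \<Rightarrow> (nat \<Rightarrow> real mat) \<Rightarrow> nat \<Rightarrow> real mat" where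
  "Cm U lam k \<beta> X Xi 0 = 1\<^sub>m k"
| "Cm U lam k \<beta> X Xi (Suc t) = Lfst lam k * minv (Gm U lam k \<beta> X Xi t) * Cm U lam k \<beta> X Xi t"

end

theory Submission
  imports Defs "Jordan_Normal_Form.Determinant" "HOL-Analysis.L2_Norm"
begin

(* Project the iteration on the top eigenvectors and on the others: with P_t = U_k^T X_t and
   Q_t = U_{-k}^T X_t the QR steps read
     P_{t+1} R_{t+1} = Lambda_k G_t^{-1} P_t,
     Q_{t+1} R_{t+1} = Lambda_{-k} Q_t - beta Q_{t-1} R_t^{-1} + U_{-k}^T Xi_t,
   where G_t absorbs the momentum and the noise seen by the top block. Hence H_t C_t = Q_t P_t^{-1} C_t
   satisfies a three-term recurrence with coefficients Lambda_{-k} and beta, forced by Psi_t C_t; as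
   Lambda_{-k} is diagonal it is solved entrywise by the polynomials p_t and q_t.
   The analytic content is that all these inverses exist. Whenever P_t is invertible, the bound on
   U_k^T Xi_t gives ||E_t|| <= c := (lambda_k - 2 sqrt beta) / (32 lambda_k), and then
   lambda_k > 2 sqrt beta propagates ||G_t|| <= 1 / (1/2 - c) from t to t + 1, so that G_t exists
   and P_{t+1} and R_{t+1} are invertible again. *)

section \<open>Norms and inverses\<close>

lemma vnorm_L2: "vnorm v = L2_set (\<lambda>i. v $ i) {0..<dim_vec v}"
  unfolding vnorm_def L2_set_def scalar_prod_def by (simp add: power2_eq_square)

lemma vnorm_nonneg [simp]: "0 \<le> vnorm v"
  unfolding vnorm_L2 by simp

lemma vnorm_eq_0_iff: "vnorm v = 0 \<longleftrightarrow> v = 0\<^sub>v (dim_vec v)"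
proof
  assume "vnorm v = 0"
  then show "v = 0\<^sub>v (dim_vec v)"
    unfolding vnorm_L2 by (intro eq_vecI) (auto simp: L2_set_eq_0_iff)
next
  assume "v = 0\<^sub>v (dim_vec v)"
  then have "\<forall>i\<in>{0..<dim_vec v}. v $ i = 0"
    by (metis atLeastLessThan_iff index_zero_vec(1))
  then show "vnorm v = 0"
    unfolding vnorm_L2 by (simp add: L2_set_eq_0_iff)
qed

lemma vnorm_nth_le:
  assumes "i < dim_vec v"
  shows "\<bar>v $ i\<bar> \<le> vnorm v"
proof -
  have "\<bar>v $ i\<bar> \<le> L2_set (\<lambda>i. \<bar>v $ i\<bar>) {0..<dim_vec v}"
    using assms by (intro member_le_L2_set) auto
  then show ?thesis
    unfolding vnorm_L2 L2_set_def by simp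
qed

lemma vnorm_smult: "vnorm (c \<cdot>\<^sub>v v) = \<bar>c\<bar> * vnorm v"
proof -
  have "(\<Sum>i\<in>{0..<dim_vec v}. ((c \<cdot>\<^sub>v v) $ i)\<^sup>2) = c\<^sup>2 * (\<Sum>i\<in>{0..<dim_vec v}. (v $ i)\<^sup>2)"
    by (simp add: power_mult_distrib sum_distrib_left)
  then show ?thesis unfolding vnorm_L2 L2_set_def by (simp add: real_sqrt_mult)
qed

lemma vnorm_triangle:
  assumes "dim_vec u = dim_vec w"
  shows "vnorm (u + w) \<le> vnorm u + vnorm w"
proof -
  have "vnorm (u + w) = L2_set (\<lambda>i. u $ i + w $ i) {0..<dim_vec w}"
    unfolding vnorm_L2 using assms by (intro L2_set_cong) auto
  then show ?thesis
    unfolding vnorm_L2 using assms L2_set_triangle_ineq by metis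
qed

lemma vnorm_add_ge:
  assumes "dim_vec u = dim_vec w"
  shows "vnorm u - vnorm w \<le> vnorm (u + w)"
proof -
  have "u = (u + w) + (-1) \<cdot>\<^sub>v w"
    using assms by (intro eq_vecI) auto
  then have "vnorm u \<le> vnorm (u + w) + vnorm ((-1) \<cdot>\<^sub>v w)"
    using vnorm_triangle[of "u + w" "(-1) \<cdot>\<^sub>v w"] assms by simp
  then show ?thesis by (simp add: vnorm_smult)
qed

lemma vnorm_diff_ge:
  assumes "dim_vec u = dim_vec w"
  shows "vnorm u - vnorm w \<le> vnorm (u - w)"
proof -
  have "u = (u - w) + w"
    using assms by (intro eq_vecI) auto
  then have "vnorm u \<le> vnorm (u - w) + vnorm w"
    using vnorm_triangle[of "u - w" w] assms by simp
  then show ?thesis by simp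
qed

lemma vnorm_mult_mat_vec_le_sum_abs:
  assumes M: "M \<in> carrier_mat nr nc" and y: "y \<in> carrier_vec nc"
  shows "vnorm (M *\<^sub>v y) \<le> (\<Sum>i<nr. \<Sum>j<nc. \<bar>M $$ (i,j)\<bar>) * vnorm y"
proof -
  have entry: "\<bar>(M *\<^sub>v y) $ i\<bar> \<le> (\<Sum>j<nc. \<bar>M $$ (i,j)\<bar>) * vnorm y" if i: "i < nr" for i
  proof -
    have "\<bar>(M *\<^sub>v y) $ i\<bar> = \<bar>\<Sum>j<nc. M $$ (i,j) * y $ j\<bar>"
      using M y i by (simp add: scalar_prod_def atLeast0LessThan)
    also have "\<dots> \<le> (\<Sum>j<nc. \<bar>M $$ (i,j)\<bar> * \<bar>y $ j\<bar>)"
      by (simp add: sum_abs[THEN order_trans] abs_mult)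
    also have "\<dots> \<le> (\<Sum>j<nc. \<bar>M $$ (i,j)\<bar> * vnorm y)"
    proof (intro sum_mono mult_left_mono)
      fix j assume "j \<in> {..<nc}"
      then show "\<bar>y $ j\<bar> \<le> vnorm y"
        using y by (intro vnorm_nth_le) auto
    qed simp
    finally show ?thesis by (simp add: sum_distrib_right)
  qed
  have "vnorm (M *\<^sub>v y) \<le> (\<Sum>i\<in>{0..<nr}. \<bar>(M *\<^sub>v y) $ i\<bar>)"
    unfolding vnorm_L2 using M by (metis L2_set_le_sum_abs carrier_matD(1) dim_mult_mat_vec)
  also have "\<dots> = (\<Sum>i<nr. \<bar>(M *\<^sub>v y) $ i\<bar>)"
    by (simp add: atLeast0LessThan)
  also have "\<dots> \<le> (\<Sum>i<nr. (\<Sum>j<nc. \<bar>M $$ (i,j)\<bar>) * vnorm y)"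
    by (intro sum_mono entry) auto
  finally show ?thesis by (simp add: sum_distrib_right)
qed

lemma vnorm_normalize:
  assumes "x \<in> carrier_vec n" and "vnorm x \<noteq> 0" and "M \<in> carrier_mat m n"
  shows "(1 / vnorm x) \<cdot>\<^sub>v x \<in> carrier_vec n" and "vnorm ((1 / vnorm x) \<cdot>\<^sub>v x) = 1"
    and "vnorm (M *\<^sub>v ((1 / vnorm x) \<cdot>\<^sub>v x)) = vnorm (M *\<^sub>v x) / vnorm x"
proof -
  show "(1 / vnorm x) \<cdot>\<^sub>v x \<in> carrier_vec n"
    using assms(1) by simp
  show "vnorm ((1 / vnorm x) \<cdot>\<^sub>v x) = 1"
    using assms(2) by (simp add: vnorm_smult)
  have "M *\<^sub>v ((1 / vnorm x) \<cdot>\<^sub>v x) = (1 / vnorm x) \<cdot>\<^sub>v (M *\<^sub>v x)"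
    using assms(3,1) by (rule mult_mat_vec)
  then show "vnorm (M *\<^sub>v ((1 / vnorm x) \<cdot>\<^sub>v x)) = vnorm (M *\<^sub>v x) / vnorm x"
    by (simp add: vnorm_smult)
qed

lemma vnorm_mult_mat_vec_le_spec_norm:
  assumes x: "x \<in> carrier_vec (dim_col M)"
  shows "vnorm (M *\<^sub>v x) \<le> spec_norm M * vnorm x"
proof (cases "vnorm x = 0")
  case True
  then have "M *\<^sub>v x = 0\<^sub>v (dim_row M)"
    using x by (intro eq_vecI) (auto simp: vnorm_eq_0_iff scalar_prod_def)
  then have "vnorm (M *\<^sub>v x) = 0"
    by (simp add: vnorm_eq_0_iff)
  then show ?thesis
    using True by simp
next
  case False
  let ?y = "(1 / vnorm x) \<cdot>\<^sub>v x"
  let ?S = "{vnorm (M *\<^sub>v x) | x. x \<in> carrier_vec (dim_col M) \<and> vnorm x = 1}"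
  have M: "M \<in> carrier_mat (dim_row M) (dim_col M)" by auto
  note y = vnorm_normalize[OF x False M]
  have "bdd_above ?S"
    unfolding bdd_above_def using vnorm_mult_mat_vec_le_sum_abs[OF M] by fastforce
  moreover have "vnorm (M *\<^sub>v ?y) \<in> ?S" using y(1,2) by blast
  ultimately have "vnorm (M *\<^sub>v ?y) \<le> spec_norm M"
    unfolding spec_norm_def by (meson cSup_upper)
  then have "vnorm (M *\<^sub>v x) / vnorm x \<le> spec_norm M"
    unfolding y(3) .
  moreover have "0 < vnorm x"
    using False by (simp add: order_less_le)
  ultimately show ?thesis by (simp add: pos_divide_le_eq mult.commute)
qed

lemma sigma_min_mult_vnorm_le:
  assumes x: "x \<in> carrier_vec (dim_col M)"
  shows "sigma_min M * vnorm x \<le> vnorm (M *\<^sub>v x)"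
proof (cases "vnorm x = 0")
  case True
  then show ?thesis by simp
next
  case False
  let ?y = "(1 / vnorm x) \<cdot>\<^sub>v x"
  let ?S = "{vnorm (M *\<^sub>v x) | x. x \<in> carrier_vec (dim_col M) \<and> vnorm x = 1}"
  have M: "M \<in> carrier_mat (dim_row M) (dim_col M)" by auto
  note y = vnorm_normalize[OF x False M]
  have "bdd_below ?S"
    unfolding bdd_below_def using vnorm_nonneg by fastforce
  moreover have "vnorm (M *\<^sub>v ?y) \<in> ?S" using y(1,2) by blast
  ultimately have "sigma_min M \<le> vnorm (M *\<^sub>v ?y)"
    unfolding sigma_min_def by (meson cInf_lower)
  then have "sigma_min M \<le> vnorm (M *\<^sub>v x) / vnorm x"
    unfolding y(3) .
  moreover have "0 < vnorm x"
    using False by (simp add: order_less_le)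
  ultimately show ?thesis by (simp add: pos_le_divide_eq mult.commute)
qed

lemma sigma_min_nonneg:
  assumes "0 < dim_col M"
  shows "0 \<le> sigma_min M"
proof -
  let ?e = "unit_vec (dim_col M) 0 :: real vec"
  have "vnorm ?e = 1" unfolding vnorm_def using assms by simp
  then have "vnorm (M *\<^sub>v ?e) \<in> {vnorm (M *\<^sub>v x) | x. x \<in> carrier_vec (dim_col M) \<and> vnorm x = 1}"
    by (auto intro!: exI[of _ ?e])
  then have "{vnorm (M *\<^sub>v x) | x. x \<in> carrier_vec (dim_col M) \<and> vnorm x = 1} \<noteq> {}"
    by blast
  then show ?thesis unfolding sigma_min_def by (rule cInf_greatest) auto
qed

lemma cos_arccos_le: "0 \<le> (y::real) \<Longrightarrow> cos (arccos y) \<le> y"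
  by (cases "y \<le> 1") (auto simp: cos_arccos intro: order_trans[OF cos_le_one])

lemma pos_if_cos_arccos_pos: "0 \<le> (y::real) \<Longrightarrow> 0 < cos (arccos y) \<Longrightarrow> 0 < y"
  by (cases "y \<le> 1") (auto simp: cos_arccos)

lemma minv_inverse:
  assumes A: "A \<in> carrier_mat n n" and "det A \<noteq> 0"
  shows "minv A \<in> carrier_mat n n" "A * minv A = 1\<^sub>m n" "minv A * A = 1\<^sub>m n"
proof -
  obtain B where B: "B \<in> carrier_mat n n" "B * A = 1\<^sub>m n" "A * B = 1\<^sub>m n"
    using det_non_zero_imp_unit[OF assms, of "()"] unfolding Units_def ring_mat_def by auto
  have "\<exists>B. B \<in> carrier_mat (dim_col A) (dim_row A) \<and> inverts_mat A B \<and> inverts_mat B A"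
    using A B by (intro exI[of _ B]) (auto simp: inverts_mat_def)
  then have "minv A \<in> carrier_mat (dim_col A) (dim_row A) \<and> inverts_mat A (minv A) \<and> inverts_mat (minv A) A"
    unfolding minv_def by (rule someI_ex)
  then show "minv A \<in> carrier_mat n n" "A * minv A = 1\<^sub>m n" "minv A * A = 1\<^sub>m n"
    using A by (auto simp: inverts_mat_def)
qed

lemma minv_eqI:
  assumes A: "A \<in> carrier_mat n n" and B: "B \<in> carrier_mat n n" and AB: "A * B = 1\<^sub>m n"
  shows "minv A = B"
proof -
  have "det A \<noteq> 0" using det_mult[OF A B] AB by auto
  note inv = minv_inverse[OF A this]
  have "minv A = minv A * (A * B)" using inv(1) AB by simp
  also have "\<dots> = (minv A * A) * B" using assoc_mult_mat[OF inv(1) A B] by simp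
  also have "\<dots> = B" using inv(3) B by simp
  finally show ?thesis .
qed

lemma det_nonzero_if_bounded_below:
  assumes A: "A \<in> carrier_mat n n" and m: "0 < m"
    and below: "\<forall>v\<in>carrier_vec n. m * vnorm v \<le> vnorm (A *\<^sub>v v)"
  shows "det A \<noteq> 0"
proof
  assume "det A = 0"
  then obtain v where v: "v \<in> carrier_vec n" "v \<noteq> 0\<^sub>v n" "A *\<^sub>v v = 0\<^sub>v n"
    using det_0_iff_vec_prod_zero_field[OF A] by auto
  have "m * vnorm v \<le> vnorm (A *\<^sub>v v)"
    using below v(1) by blast
  also have "\<dots> = 0"
    using v(3) by (simp add: vnorm_eq_0_iff)
  finally have "m * vnorm v \<le> 0" .
  then have "vnorm v = 0"
    using m by (simp add: mult_le_0_iff antisym)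
  then show False
    using v by (simp add: vnorm_eq_0_iff)
qed

lemma minv_norm_le:
  assumes B: "B \<in> carrier_mat n n" and m: "0 < m"
    and below: "\<forall>v\<in>carrier_vec n. m * vnorm v \<le> vnorm (B *\<^sub>v v)"
    and v: "v \<in> carrier_vec n"
  shows "vnorm (minv B *\<^sub>v v) \<le> (1 / m) * vnorm v"
proof -
  note inv = minv_inverse[OF B det_nonzero_if_bounded_below[OF B m below]]
  have "B *\<^sub>v (minv B *\<^sub>v v) = (B * minv B) *\<^sub>v v"
    using B inv(1) v by simp
  also have "\<dots> = v"
    using inv(2) v by simp
  finally have "B *\<^sub>v (minv B *\<^sub>v v) = v" .
  then have "m * vnorm (minv B *\<^sub>v v) \<le> vnorm v"
    using below inv(1) v by (metis mult_mat_vec_carrier)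
  then show ?thesis using m by (simp add: field_simps)
qed

lemma vnorm_mult_minv_le:
  assumes P: "P \<in> carrier_mat n n" "det P \<noteq> 0" and Z: "Z \<in> carrier_mat m n"
    and a: "0 \<le> a" and Z_le: "spec_norm Z \<le> a * sigma_min P" and v: "v \<in> carrier_vec n"
  shows "vnorm (Z *\<^sub>v (minv P *\<^sub>v v)) \<le> a * vnorm v"
proof -
  note inv = minv_inverse[OF P]
  define w where "w = minv P *\<^sub>v v"
  have w: "w \<in> carrier_vec n"
    unfolding w_def using inv(1) v by simp
  have "P *\<^sub>v w = (P * minv P) *\<^sub>v v"
    unfolding w_def using P(1) inv(1) v by (rule assoc_mult_mat_vec[symmetric])
  then have sigma_w: "sigma_min P * vnorm w \<le> vnorm v"
    using sigma_min_mult_vnorm_le[of w P] P(1) w inv(2) v by simp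
  have "vnorm (Z *\<^sub>v w) \<le> spec_norm Z * vnorm w"
    using vnorm_mult_mat_vec_le_spec_norm[of w Z] Z w by simp
  also have "\<dots> \<le> a * sigma_min P * vnorm w"
    using Z_le by (rule mult_right_mono) simp
  also have "\<dots> \<le> a * vnorm v"
    using sigma_w a by (simp add: mult.assoc mult_left_mono)
  finally show ?thesis
    unfolding w_def .
qed

section \<open>Matrix algebra under dimension constraints\<close>

lemma mult_assoc_dims:
  "dim_col A = dim_row B \<Longrightarrow> dim_col B = dim_row C \<Longrightarrow> A * B * C = A * (B * (C :: 'a :: comm_ring_1 mat))"
  by (rule assoc_mult_mat[of A "dim_row A" "dim_col A" B "dim_col B" C "dim_col C"]) auto

lemma add_mult_distrib_dims:
  "dim_row A = dim_row B \<Longrightarrow> dim_col A = dim_col B \<Longrightarrow> dim_col B = dim_row C \<Longrightarrow>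
    (A + B) * C = A * C + B * (C :: 'a :: comm_ring_1 mat)"
  by (rule add_mult_distrib_mat[of _ "dim_row B" "dim_col B" _ _ "dim_col C"]) auto

lemma minus_mult_distrib_dims:
  "dim_row A = dim_row B \<Longrightarrow> dim_col A = dim_col B \<Longrightarrow> dim_col B = dim_row C \<Longrightarrow>
    (A - B) * C = A * C - B * (C :: 'a :: comm_ring_1 mat)"
  by (rule minus_mult_distrib_mat[of _ "dim_row B" "dim_col B" _ _ "dim_col C"]) auto

lemma mult_add_distrib_dims:
  "dim_col A = dim_row B \<Longrightarrow> dim_row B = dim_row C \<Longrightarrow> dim_col B = dim_col C \<Longrightarrow>
    A * (B + C) = A * B + A * (C :: 'a :: comm_ring_1 mat)"
  by (rule mult_add_distrib_mat[of _ "dim_row A" "dim_col A" _ "dim_col B"]) auto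

lemma mult_minus_distrib_dims:
  "dim_col A = dim_row B \<Longrightarrow> dim_row B = dim_row C \<Longrightarrow> dim_col B = dim_col C \<Longrightarrow>
    A * (B - C) = A * B - A * (C :: 'a :: comm_ring_1 mat)"
  by (rule mult_minus_distrib_mat[of _ "dim_row A" "dim_col A" _ "dim_col B"]) auto

lemma smult_mult_dims: "dim_col A = dim_row B \<Longrightarrow> (c \<cdot>\<^sub>m A) * B = c \<cdot>\<^sub>m (A * (B :: 'a :: comm_ring_1 mat))"
  by (rule mult_smult_assoc_mat[of _ "dim_row A" "dim_col A" _ "dim_col B"]) auto

lemma mult_smult_dims: "dim_col A = dim_row B \<Longrightarrow> A * (c \<cdot>\<^sub>m B) = c \<cdot>\<^sub>m (A * (B :: 'a :: comm_ring_1 mat))"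
  by (rule mult_smult_distrib[of _ "dim_row A" "dim_col A" _ "dim_col B"]) auto

lemmas mat_algebra_dims = mult_assoc_dims add_mult_distrib_dims minus_mult_distrib_dims
  mult_add_distrib_dims mult_minus_distrib_dims smult_mult_dims mult_smult_dims

lemma mult_cancel_left_dims:
  assumes AB: "A * B = 1\<^sub>m n" and "dim_col A = dim_row B" and "dim_row C = dim_col B"
  shows "A * (B * (C :: 'a :: comm_ring_1 mat)) = C"
proof -
  have "dim_col B = n" using arg_cong[OF AB, of dim_col] by simp
  then show ?thesis
    using assms by (simp flip: mult_assoc_dims)
qed

lemma transpose_eigenblock_mult:
  fixes A U :: "real mat"
  assumes A: "A \<in> carrier_mat d d" and A_sym: "transpose_mat A = A" and U: "U \<in> carrier_mat d d"
    and eig: "\<forall>i<d. A *\<^sub>v col U i = lam i \<cdot>\<^sub>v col U i" and ms: "m + s \<le> d"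
  shows "transpose_mat (mat d m (\<lambda>(i,j). U $$ (i, j + s))) * A
       = mat_diag m (\<lambda>i. lam (i + s)) * transpose_mat (mat d m (\<lambda>(i,j). U $$ (i, j + s)))"
proof -
  let ?T = "transpose_mat (mat d m (\<lambda>(i,j). U $$ (i, j + s)))"
  have "?T * A = mat m d (\<lambda>(i,j). lam (i + s) * ?T $$ (i,j))"
  proof (rule eq_matI)
    fix i j assume "i < dim_row (mat m d (\<lambda>(i,j). lam (i + s) * ?T $$ (i,j)))"
      "j < dim_col (mat m d (\<lambda>(i,j). lam (i + s) * ?T $$ (i,j)))"
    then have ij: "i < m" "j < d" by auto
    have isd: "i + s < d" using ij ms by auto
    have "(\<Sum>l = 0..<d. A $$ (j, l) * U $$ (l, i + s)) = (A *\<^sub>v col U (i + s)) $ j"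
      using A U ij isd by (auto simp: scalar_prod_def intro: sum.cong)
    also have "\<dots> = lam (i + s) * U $$ (j, i + s)"
      using eig isd U ij by simp
    finally have eigen_entry: "(\<Sum>l = 0..<d. A $$ (j, l) * U $$ (l, i + s)) = lam (i + s) * U $$ (j, i + s)" .
    have "A $$ (l, j) = A $$ (j, l)" if "l < d" for l
      using arg_cong[OF A_sym, of "\<lambda>M. M $$ (l, j)"] A that ij by simp
    then have "(?T * A) $$ (i, j) = (\<Sum>l = 0..<d. A $$ (j, l) * U $$ (l, i + s))"
      using A U ij by (auto simp: scalar_prod_def mult.commute intro: sum.cong)
    then show "(?T * A) $$ (i, j) = mat m d (\<lambda>(i,j). lam (i + s) * ?T $$ (i,j)) $$ (i, j)"
      using eigen_entry ij by simp
  qed (use A in auto)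
  also have "\<dots> = mat_diag m (\<lambda>i. lam (i + s)) * ?T"
    by (rule mat_diag_mult_left[symmetric]) auto
  finally show ?thesis .
qed

lemma intertwining_mult:
  assumes "T * A = D * T" and "T \<in> carrier_mat m d" "A \<in> carrier_mat d d" "D \<in> carrier_mat m m"
    and "M \<in> carrier_mat d n"
  shows "T * (A * M) = D * (T * M)"
proof -
  have "T * (A * M) = T * A * M"
    using assms(2,3,5) by (rule assoc_mult_mat[symmetric])
  also have "\<dots> = D * (T * M)"
    unfolding assms(1) using assms(4,2,5) by (rule assoc_mult_mat)
  finally show ?thesis .
qed

lemma mult_one_left_dims: "dim_row M = n \<Longrightarrow> 1\<^sub>m n * M = (M :: 'a :: semiring_1 mat)"
  by (rule left_mult_one_mat[OF carrier_matI[of M n "dim_col M"]]) simp_all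

lemma mult_one_right_dims: "dim_col M = n \<Longrightarrow> M * 1\<^sub>m n = (M :: 'a :: semiring_1 mat)"
  by (rule right_mult_one_mat[OF carrier_matI[of M "dim_row M" n]]) simp_all

lemma smult_mult_mat_vec:
  assumes "M \<in> carrier_mat n m" and "v \<in> carrier_vec m"
  shows "(c \<cdot>\<^sub>m M) *\<^sub>v v = c \<cdot>\<^sub>v (M *\<^sub>v (v :: 'a :: comm_ring_1 vec))"
  using assms by (intro eq_vecI) (auto simp: scalar_prod_def sum_distrib_left ac_simps)

section \<open>Diagonal matrices and the three-term recurrence\<close>

lemma mat_diag_dims [simp]: "dim_row (mat_diag n f) = n" "dim_col (mat_diag n f) = n"
  unfolding mat_diag_def by simp_all

lemma msum_dims [simp]: "dim_row (msum nr nc f t) = nr" "dim_col (msum nr nc f t) = nc"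
  unfolding msum_def by simp_all

lemma poly_mat_dims [simp]: "dim_row (poly_mat n p M) = n" "dim_col (poly_mat n p M) = n"
  unfolding poly_mat_def by simp_all

lemma mat_diag_mult_vec_norm_le:
  assumes f: "\<forall>i<n. \<bar>f i\<bar> \<le> c" and c: "0 \<le> c" and v: "v \<in> carrier_vec n"
  shows "vnorm (mat_diag n f *\<^sub>v v) \<le> c * vnorm v"
proof -
  have entry: "(mat_diag n f *\<^sub>v v) $ i = f i * v $ i" if "i < n" for i
  proof -
    have "(mat_diag n f *\<^sub>v v) $ i = (\<Sum>j = 0..<n. (if i = j then f j else 0) * v $ j)"
      using that v unfolding mat_diag_def by (simp add: scalar_prod_def)
    also have "\<dots> = f i * v $ i"
      using that by (subst sum.remove[of _ i]) auto
    finally show ?thesis .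
  qed
  have "vnorm (mat_diag n f *\<^sub>v v) = L2_set (\<lambda>i. \<bar>f i * v $ i\<bar>) {0..<n}"
    unfolding vnorm_L2 L2_set_def by (simp add: entry del: index_mult_mat_vec)
  also have "\<dots> \<le> L2_set (\<lambda>i. c * \<bar>v $ i\<bar>) {0..<n}"
    using f by (intro L2_set_mono) (auto simp: abs_mult mult_right_mono)
  also have "\<dots> = c * vnorm v"
    unfolding vnorm_L2 L2_set_right_distrib[OF c] using v by (simp add: L2_set_def power_mult_distrib)
  finally show ?thesis .
qed

lemma pow_mat_diag: "mat_diag n (f :: nat \<Rightarrow> 'a :: comm_semiring_1) ^\<^sub>m l = mat_diag n (\<lambda>i. f i ^ l)"
  by (induction l) (simp_all add: mat_diag_def[of n "\<lambda>i. 1"] mult.commute)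

lemma poly_mat_diag: "poly_mat n p (mat_diag n f) = mat_diag n (\<lambda>i. poly p (f i))"
proof (rule eq_matI)
  fix i j assume "i < dim_row (mat_diag n (\<lambda>i. poly p (f i)))" "j < dim_col (mat_diag n (\<lambda>i. poly p (f i)))"
  then have "i < n" "j < n" by simp_all
  then show "poly_mat n p (mat_diag n f) $$ (i, j) = mat_diag n (\<lambda>i. poly p (f i)) $$ (i, j)"
    unfolding poly_mat_def pow_mat_diag
    by (cases "i = j") (simp_all add: mat_diag_def poly_altdef)
qed (simp_all add: poly_mat_def)

lemma qP_convolution_step:
  "(\<Sum>s<Suc (Suc t). poly (qP \<beta> s) x * w (Suc (Suc t) - 1 - s))
     = x * (\<Sum>s<Suc t. poly (qP \<beta> s) x * w (Suc t - 1 - s))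
       - \<beta> * (\<Sum>s<t. poly (qP \<beta> s) x * w (t - 1 - s)) + w (Suc t)"
proof -
  have "(\<Sum>s<Suc (Suc t). poly (qP \<beta> s) x * w (Suc (Suc t) - 1 - s))
      = w (Suc t) + x * w t + (\<Sum>s<t. poly (qP \<beta> (Suc (Suc s))) x * w (t - 1 - s))"
    by (simp only: sum.lessThan_Suc_shift) simp
  also have "(\<Sum>s<t. poly (qP \<beta> (Suc (Suc s))) x * w (t - 1 - s))
      = x * (\<Sum>s<t. poly (qP \<beta> (Suc s)) x * w (t - 1 - s))
        - \<beta> * (\<Sum>s<t. poly (qP \<beta> s) x * w (t - 1 - s))"
    by (simp add: sum_distrib_left algebra_simps sum_subtractf)
  also have "x * (\<Sum>s<Suc t. poly (qP \<beta> s) x * w (Suc t - 1 - s))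
      = x * w t + x * (\<Sum>s<t. poly (qP \<beta> (Suc s)) x * w (t - 1 - s))"
    by (simp only: sum.lessThan_Suc_shift) (simp add: algebra_simps)
  ultimately show ?thesis by simp
qed

lemma three_term_recurrence_poly:
  fixes y w :: "nat \<Rightarrow> real"
  assumes y1: "y 1 = x / 2 * y 0 + w 0"
    and y_step: "\<And>t. y (Suc (Suc t)) = x * y (Suc t) - \<beta> * y t + w (Suc t)"
  shows "y t = poly (pP \<beta> t) x * y 0 + (\<Sum>s<t. poly (qP \<beta> s) x * w (t - 1 - s))"
proof -
  define S where "S t = (\<Sum>s<t. poly (qP \<beta> s) x * w (t - 1 - s))" for t
  have S_step: "S (Suc (Suc t)) = x * S (Suc t) - \<beta> * S t + w (Suc t)" for t
    unfolding S_def by (rule qP_convolution_step)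
  have "y t = poly (pP \<beta> t) x * y 0 + S t"
  proof (induction t rule: induct_nat_012)
    case (ge2 t)
    have "y (Suc (Suc t)) = x * y (Suc t) - \<beta> * y t + w (Suc t)"
      by (rule y_step)
    also have "\<dots> = (x * poly (pP \<beta> (Suc t)) x - \<beta> * poly (pP \<beta> t) x) * y 0
        + (x * S (Suc t) - \<beta> * S t + w (Suc t))"
      unfolding ge2.IH by (simp add: algebra_simps)
    also have "\<dots> = poly (pP \<beta> (Suc (Suc t))) x * y 0 + S (Suc (Suc t))"
      by (simp add: S_step)
    finally show ?case .
  qed (simp_all add: y1[unfolded One_nat_def] S_def)
  then show ?thesis
    unfolding S_def .
qed

lemma diag_three_term_recurrence_poly_mat:
  fixes K F :: "nat \<Rightarrow> real mat"
  assumes K: "\<And>t. K t \<in> carrier_mat n m" and F: "\<And>t. F t \<in> carrier_mat n m"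
    and K1: "K 1 = (1/2) \<cdot>\<^sub>m (mat_diag n \<mu> * K 0) + F 0"
    and K_step: "\<And>t. K (Suc (Suc t)) = mat_diag n \<mu> * K (Suc t) - \<beta> \<cdot>\<^sub>m K t + F (Suc t)"
  shows "K t = poly_mat n (pP \<beta> t) (mat_diag n \<mu>) * K 0
              + msum n m (\<lambda>s. poly_mat n (qP \<beta> s) (mat_diag n \<mu>) * F (t - 1 - s)) t"
proof (rule eq_matI)
  fix i j assume "i < dim_row (poly_mat n (pP \<beta> t) (mat_diag n \<mu>) * K 0
      + msum n m (\<lambda>s. poly_mat n (qP \<beta> s) (mat_diag n \<mu>) * F (t - 1 - s)) t)"
    "j < dim_col (poly_mat n (pP \<beta> t) (mat_diag n \<mu>) * K 0
      + msum n m (\<lambda>s. poly_mat n (qP \<beta> s) (mat_diag n \<mu>) * F (t - 1 - s)) t)"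
  then have ij: "i < n" "j < m" by (simp_all add: msum_def)
  have dims: "dim_row (K t) = n" "dim_col (K t) = m" "dim_row (F t) = n" "dim_col (F t) = m" for t
    using K[of t] F[of t] by auto
  have diag_mult: "(mat_diag n f * M) $$ (i, j) = f i * M $$ (i, j)" if "M \<in> carrier_mat n m" for f M
    by (subst mat_diag_mult_left[OF that]) (use ij in simp)
  have "K t $$ (i, j) = poly (pP \<beta> t) (\<mu> i) * K 0 $$ (i, j)
      + (\<Sum>s<t. poly (qP \<beta> s) (\<mu> i) * F (t - 1 - s) $$ (i, j))"
  proof (rule three_term_recurrence_poly)
    show "K 1 $$ (i, j) = \<mu> i / 2 * K 0 $$ (i, j) + F 0 $$ (i, j)"
      unfolding K1 using K F ij by (simp add: diag_mult dims del: index_mult_mat(1))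
    show "K (Suc (Suc t)) $$ (i, j) = \<mu> i * K (Suc t) $$ (i, j) - \<beta> * K t $$ (i, j)
        + F (Suc t) $$ (i, j)" for t
      unfolding K_step using K F ij by (simp add: diag_mult dims del: index_mult_mat(1))
  qed
  then show "K t $$ (i, j) = (poly_mat n (pP \<beta> t) (mat_diag n \<mu>) * K 0
      + msum n m (\<lambda>s. poly_mat n (qP \<beta> s) (mat_diag n \<mu>) * F (t - 1 - s)) t) $$ (i, j)"
    using K F ij by (simp add: poly_mat_diag diag_mult msum_def dims del: index_mult_mat(1))
qed (use K[of t] in \<open>simp_all add: msum_def\<close>)

lemma msum_mult_right:
  assumes F: "\<And>s. F s \<in> carrier_mat n m" and C: "C \<in> carrier_mat m m'"
  shows "msum n m F t * C = msum n m' (\<lambda>s. F s * C) t"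
proof (rule eq_matI)
  fix i j assume "i < dim_row (msum n m' (\<lambda>s. F s * C) t)" "j < dim_col (msum n m' (\<lambda>s. F s * C) t)"
  then have ij: "i < n" "j < m'" by (simp_all add: msum_def)
  have "(msum n m F t * C) $$ (i, j) = (\<Sum>l<m. (\<Sum>s<t. F s $$ (i, l)) * C $$ (l, j))"
    using C ij by (simp add: msum_def scalar_prod_def atLeast0LessThan)
  also have "\<dots> = (\<Sum>s<t. \<Sum>l<m. F s $$ (i, l) * C $$ (l, j))"
    by (simp add: sum_distrib_right sum.swap[of _ "{..<m}"])
  also have "\<dots> = msum n m' (\<lambda>s. F s * C) t $$ (i, j)"
  proof -
    have "(F s * C) $$ (i, j) = (\<Sum>l<m. F s $$ (i, l) * C $$ (l, j))" for s
      using F[of s] C ij by (simp add: scalar_prod_def atLeast0LessThan)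
    then show ?thesis
      using ij by (simp add: msum_def)
  qed
  finally show "(msum n m F t * C) $$ (i, j) = msum n m' (\<lambda>s. F s * C) t $$ (i, j)" .
qed (use C in \<open>simp_all add: msum_def\<close>)

section \<open>The projected iteration\<close>

locale anpm =
  fixes d k :: nat and \<beta> :: real and A U :: "real mat" and lam :: "nat \<Rightarrow> real"
    and X R Xi :: "nat \<Rightarrow> real mat"
  assumes dk: "d > k" "k \<ge> 1"
    and A_carrier: "A \<in> carrier_mat d d"
    and A_sym: "transpose_mat A = A"
    and U_carrier: "U \<in> carrier_mat d d"
    and U_eig: "\<forall>i < d. A *\<^sub>v col U i = lam i \<cdot>\<^sub>v col U i"
    and lam_sorted: "\<forall>i j. i \<le> j \<longrightarrow> j < d \<longrightarrow> lam j \<le> lam i"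
    and beta_pos: "\<beta> > 0"
    and beta_gap: "lam (k - 1) > 2 * sqrt \<beta>"
    and X0_carrier: "X 0 \<in> carrier_mat d k"
    and cos0: "cos (theta_k (Ufst U k) (X 0)) > 0"
    and Xi_carrier_all: "\<forall>t. Xi t \<in> carrier_mat d k"
    and QR1: "is_QR ((1/2) \<cdot>\<^sub>m (A * X 0) + Xi 0) (X 1) (R 1)"
    and QRstep: "\<forall>t. is_QR (A * X (Suc t) - \<beta> \<cdot>\<^sub>m (X t * minv (R (Suc t))) + Xi (Suc t))
                           (X (Suc (Suc t))) (R (Suc (Suc t)))"
    and pert_fst: "\<forall>t. spec_norm (transpose_mat (Ufst U k) * Xi t)
                         \<le> (1/32) * (lam (k - 1) - 2 * sqrt \<beta>) * cos (theta_k (Ufst U k) (X t))"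
begin

lemma Xi_carrier [simp]: "Xi t \<in> carrier_mat d k"
  using Xi_carrier_all by blast

lemma QR_first: "X 1 \<in> carrier_mat d k" "R 1 \<in> carrier_mat k k"
  "X 1 * R 1 = (1/2) \<cdot>\<^sub>m (A * X 0) + Xi 0"
  using QR1 Xi_carrier[of 0] unfolding is_QR_def by auto

lemma QR_step: "X (Suc (Suc t)) \<in> carrier_mat d k" "R (Suc (Suc t)) \<in> carrier_mat k k"
  "X (Suc (Suc t)) * R (Suc (Suc t)) = A * X (Suc t) - \<beta> \<cdot>\<^sub>m (X t * minv (R (Suc t))) + Xi (Suc t)"
  using QRstep[rule_format, of t] Xi_carrier[of "Suc t"] unfolding is_QR_def by auto

lemma X_carrier [simp]: "X t \<in> carrier_mat d k"
proof (cases t)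
  case (Suc s)
  then show ?thesis
    using QR_first(1) QR_step(1) by (cases s) auto
qed (use X0_carrier in simp)

lemmas X_dims [simp] = carrier_matD[OF X_carrier]

lemma R_carrier [simp]: "R (Suc t) \<in> carrier_mat k k"
  using QR_first(2) QR_step(2) by (cases t) auto

lemma projected_QR_first:
  assumes T: "T \<in> carrier_mat m d" and D: "D \<in> carrier_mat m m" and TA: "T * A = D * T"
  shows "T * X 1 * R 1 = (1/2) \<cdot>\<^sub>m (D * (T * X 0)) + T * Xi 0"
proof -
  have "T * X 1 * R 1 = T * (X 1 * R 1)"
    using T QR_first(2) by (rule assoc_mult_mat[OF _ X_carrier])
  also have "\<dots> = T * ((1/2) \<cdot>\<^sub>m (A * X 0)) + T * Xi 0"
    unfolding QR_first(3) using T A_carrier by (intro mult_add_distrib_mat[of _ m d _ k]) auto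
  also have "T * ((1/2) \<cdot>\<^sub>m (A * X 0)) = (1/2) \<cdot>\<^sub>m (T * (A * X 0))"
    using T A_carrier by (intro mult_smult_distrib) auto
  also have "T * (A * X 0) = D * (T * X 0)"
    using TA T A_carrier D X_carrier by (rule intertwining_mult)
  finally show ?thesis .
qed

lemma projected_QR_step:
  assumes T: "T \<in> carrier_mat m d" and D: "D \<in> carrier_mat m m" and TA: "T * A = D * T"
    and Ri: "minv (R (Suc t)) \<in> carrier_mat k k"
  shows "T * X (Suc (Suc t)) * R (Suc (Suc t))
      = D * (T * X (Suc t)) - \<beta> \<cdot>\<^sub>m (T * X t * minv (R (Suc t))) + T * Xi (Suc t)"
proof -
  have XRi: "X t * minv (R (Suc t)) \<in> carrier_mat d k"
    using X_carrier Ri by (rule mult_carrier_mat)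
  have "T * X (Suc (Suc t)) * R (Suc (Suc t)) = T * (X (Suc (Suc t)) * R (Suc (Suc t)))"
    using T QR_step(2) by (rule assoc_mult_mat[OF _ X_carrier])
  also have "\<dots> = T * (A * X (Suc t) - \<beta> \<cdot>\<^sub>m (X t * minv (R (Suc t)))) + T * Xi (Suc t)"
    unfolding QR_step(3) using T A_carrier XRi
    by (intro mult_add_distrib_mat[of _ m d _ k] minus_carrier_mat) auto
  also have "T * (A * X (Suc t) - \<beta> \<cdot>\<^sub>m (X t * minv (R (Suc t))))
      = T * (A * X (Suc t)) - \<beta> \<cdot>\<^sub>m (T * (X t * minv (R (Suc t))))"
    using T A_carrier XRi
    by (simp add: mult_minus_distrib_mat[of _ m d _ k] mult_smult_distrib[of _ m d _ k])
  also have "T * (X t * minv (R (Suc t))) = T * X t * minv (R (Suc t))"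
    using assoc_mult_mat[OF T X_carrier Ri] by simp
  also have "T * (A * X (Suc t)) = D * (T * X (Suc t))"
    using TA T A_carrier D X_carrier by (rule intertwining_mult)
  finally show ?thesis .
qed

definition P :: "nat \<Rightarrow> real mat" where "P t = transpose_mat (Ufst U k) * X t"
definition Q :: "nat \<Rightarrow> real mat" where "Q t = transpose_mat (Urest U k) * X t"
definition Z :: "nat \<Rightarrow> real mat" where "Z t = transpose_mat (Ufst U k) * Xi t"
definition W :: "nat \<Rightarrow> real mat" where "W t = transpose_mat (Urest U k) * Xi t"

lemma Ufst_T_carrier: "transpose_mat (Ufst U k) \<in> carrier_mat k d"
  unfolding Ufst_def using U_carrier by auto

lemma Urest_T_carrier: "transpose_mat (Urest U k) \<in> carrier_mat (d - k) d"
  unfolding Urest_def using U_carrier by auto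

lemma P_carrier: "P t \<in> carrier_mat k k"
  unfolding P_def using Ufst_T_carrier by simp

lemma Q_carrier: "Q t \<in> carrier_mat (d - k) k"
  unfolding Q_def using Urest_T_carrier by simp

lemma Z_carrier: "Z t \<in> carrier_mat k k"
  unfolding Z_def using Ufst_T_carrier by simp

lemma W_carrier: "W t \<in> carrier_mat (d - k) k"
  unfolding W_def using Urest_T_carrier by simp

lemmas P_dims [simp] = carrier_matD[OF P_carrier]
lemmas Q_dims [simp] = carrier_matD[OF Q_carrier]
lemmas Z_dims [simp] = carrier_matD[OF Z_carrier]
lemmas W_dims [simp] = carrier_matD[OF W_carrier]
lemmas R_dims [simp] = carrier_matD[OF R_carrier]

lemma Lfst_dims [simp]: "dim_row (Lfst lam k) = k" "dim_col (Lfst lam k) = k"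
  unfolding Lfst_def by simp_all

lemma Lfst_carrier: "Lfst lam k \<in> carrier_mat k k"
  unfolding Lfst_def by simp

lemma Lrest_dims [simp]: "dim_row (Lrest lam d k) = d - k" "dim_col (Lrest lam d k) = d - k"
  unfolding Lrest_def by simp_all

lemma Ufst_T_A: "transpose_mat (Ufst U k) * A = Lfst lam k * transpose_mat (Ufst U k)"
proof -
  have "Ufst U k = mat d k (\<lambda>(i,j). U $$ (i, j + 0))" "Lfst lam k = mat_diag k (\<lambda>i. lam (i + 0))"
    unfolding Ufst_def Lfst_def using U_carrier by auto
  then show ?thesis
    using transpose_eigenblock_mult[OF A_carrier A_sym U_carrier U_eig, of k 0] dk by simp
qed

lemma Urest_T_A: "transpose_mat (Urest U k) * A = Lrest lam d k * transpose_mat (Urest U k)"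
proof -
  have "Urest U k = mat d (d - k) (\<lambda>(i,j). U $$ (i, j + k))"
    "Lrest lam d k = mat_diag (d - k) (\<lambda>i. lam (i + k))"
    unfolding Urest_def Lrest_def using U_carrier by auto
  then show ?thesis
    using transpose_eigenblock_mult[OF A_carrier A_sym U_carrier U_eig, of "d - k" k] dk by simp
qed

lemma P_R_first: "P 1 * R 1 = (1/2) \<cdot>\<^sub>m (Lfst lam k * P 0) + Z 0"
  unfolding P_def Z_def
  by (rule projected_QR_first[OF Ufst_T_carrier _ Ufst_T_A]) (simp add: Lfst_def)

lemma Q_R_first: "Q 1 * R 1 = (1/2) \<cdot>\<^sub>m (Lrest lam d k * Q 0) + W 0"
  unfolding Q_def W_def
  by (rule projected_QR_first[OF Urest_T_carrier _ Urest_T_A]) (simp add: Lrest_def)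

lemma P_R_step:
  "minv (R (Suc t)) \<in> carrier_mat k k \<Longrightarrow> P (Suc (Suc t)) * R (Suc (Suc t))
     = Lfst lam k * P (Suc t) - \<beta> \<cdot>\<^sub>m (P t * minv (R (Suc t))) + Z (Suc t)"
  unfolding P_def Z_def
  by (rule projected_QR_step[OF Ufst_T_carrier _ Ufst_T_A]) (simp_all add: Lfst_def)

lemma Q_R_step:
  "minv (R (Suc t)) \<in> carrier_mat k k \<Longrightarrow> Q (Suc (Suc t)) * R (Suc (Suc t))
     = Lrest lam d k * Q (Suc t) - \<beta> \<cdot>\<^sub>m (Q t * minv (R (Suc t))) + W (Suc t)"
  unfolding Q_def W_def
  by (rule projected_QR_step[OF Urest_T_carrier _ Urest_T_A]) (simp_all add: Lrest_def)

lemma lam_k_le: "i < k \<Longrightarrow> lam (k - 1) \<le> lam i"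
  using lam_sorted dk by auto

lemma lam_k_pos: "0 < lam (k - 1)"
proof -
  have "0 \<le> sqrt \<beta>"
    using beta_pos by simp
  then show ?thesis
    using beta_gap by linarith
qed

lemma lam_pos: "i < k \<Longrightarrow> 0 < lam i"
  using lam_k_le lam_k_pos by force

definition Linv :: "real mat" where "Linv = mat_diag k (\<lambda>i. 1 / lam i)"

lemma Linv_dims [simp]: "dim_row Linv = k" "dim_col Linv = k"
  unfolding Linv_def by simp_all

lemma Linv_carrier: "Linv \<in> carrier_mat k k"
  unfolding Linv_def by simp

lemma Lfst_Linv: "Lfst lam k * Linv = 1\<^sub>m k" "Linv * Lfst lam k = 1\<^sub>m k"
  unfolding Lfst_def Linv_def mat_diag_diag
  using lam_pos by (auto intro!: eq_matI simp: mat_diag_def) (metis less_irrefl)+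

lemma minv_Lfst: "minv (Lfst lam k) = Linv"
  by (rule minv_eqI[OF _ _ Lfst_Linv(1)]) (simp_all add: Lfst_def Linv_def)

lemma det_Lfst: "det (Lfst lam k) \<noteq> 0"
  using det_mult[of "Lfst lam k" k Linv] Lfst_Linv(1) by (auto simp: Lfst_def Linv_def)

lemma Linv_norm_le: "v \<in> carrier_vec k \<Longrightarrow> vnorm (Linv *\<^sub>v v) \<le> (1 / lam (k - 1)) * vnorm v"
proof -
  have "\<bar>1 / lam i\<bar> \<le> 1 / lam (k - 1)" if "i < k" for i
    using lam_k_le[OF that] lam_pos[OF that] lam_k_pos by (simp add: frac_le)
  then show "v \<in> carrier_vec k \<Longrightarrow> vnorm (Linv *\<^sub>v v) \<le> (1 / lam (k - 1)) * vnorm v"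
    unfolding Linv_def using lam_k_pos by (intro mat_diag_mult_vec_norm_le) auto
qed

definition c_pert :: real where "c_pert = (lam (k - 1) - 2 * sqrt \<beta>) / (32 * lam (k - 1))"

definition g_bound :: real where "g_bound = 1 / (1/2 - c_pert)"

lemma c_pert_less: "c_pert < 1/32"
  unfolding c_pert_def using lam_k_pos beta_pos by (simp add: divide_less_eq)

lemma g_bound_pos: "0 < g_bound"
  unfolding g_bound_def using c_pert_less by simp

lemma inverse_g_bound: "1 / g_bound = 1/2 - c_pert"
  unfolding g_bound_def by simp

text \<open>The gap \<open>\<lambda>\<^sub>k > 2\<surd>\<beta>\<close> is what makes the gain \<open>g\<close> self-consistent: if
  \<open>\<parallel>G\<^sub>t\<parallel> \<le> g\<close> then the momentum term \<open>\<beta>\<Lambda>\<^sub>k\<^sup>-\<^sup>1G\<^sub>t\<Lambda>\<^sub>k\<^sup>-\<^sup>1\<close> has norm at most \<open>1/2\<close>, so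
  \<open>\<parallel>G\<^sub>t\<^sub>+\<^sub>1\<parallel> \<le> 1/(1/2 - c) = g\<close> again.\<close>
lemma beta_g_bound: "\<beta> * g_bound / lam (k - 1)^2 \<le> 1/2"
proof -
  define s L where "s = sqrt \<beta>" and "L = lam (k - 1)"
  have s: "0 < s" "s * s = \<beta>" and L: "2 * s < L"
    using beta_pos beta_gap unfolding s_def L_def by auto
  have g: "g_bound = 32 * L / (15 * L + 2 * s)"
    unfolding g_bound_def c_pert_def s_def[symmetric] L_def[symmetric] using s L
    by (simp add: field_simps)
  have "(2 * s) * (2 * s) < L * L"
    using s L by (intro mult_strict_mono) auto
  moreover have "s * (2 * s) < s * L"
    using s L by simp
  ultimately have "64 * (s * s) \<le> L * (15 * L + 2 * s)"
    by (simp add: algebra_simps)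
  then have "L / 2 * (64 * (s * s)) \<le> L / 2 * (L * (15 * L + 2 * s))"
    using s L by (intro mult_left_mono) auto
  then have "32 * L * (s * s) \<le> L\<^sup>2 / 2 * (15 * L + 2 * s)"
    by (simp add: power2_eq_square algebra_simps)
  then have "\<beta> * g_bound \<le> L\<^sup>2 / 2"
    unfolding g using s L by (simp add: pos_divide_le_eq mult.commute)
  then show ?thesis
    unfolding L_def[symmetric] using L s by (simp add: pos_divide_le_eq)
qed

abbreviation E :: "nat \<Rightarrow> real mat" where "E \<equiv> Em U lam k X Xi"
abbreviation G :: "nat \<Rightarrow> real mat" where "G \<equiv> Gm U lam k \<beta> X Xi"
abbreviation C :: "nat \<Rightarrow> real mat" where "C \<equiv> Cm U lam k \<beta> X Xi"

lemma E_eq: "E t = Linv * Z t * minv (P t)"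
  unfolding Em_def minv_Lfst Z_def P_def ..

lemma E_carrier: "det (P t) \<noteq> 0 \<Longrightarrow> E t \<in> carrier_mat k k"
  unfolding E_eq using Linv_carrier Z_carrier minv_inverse(1)[OF P_carrier] by (intro mult_carrier_mat)

definition B :: "nat \<Rightarrow> real mat" where
  "B t = (case t of 0 \<Rightarrow> (1/2) \<cdot>\<^sub>m 1\<^sub>m k + E 0 | Suc s \<Rightarrow> 1\<^sub>m k - \<beta> \<cdot>\<^sub>m (Linv * G s * Linv) + E (Suc s))"

lemma B_simps: "B 0 = (1/2) \<cdot>\<^sub>m 1\<^sub>m k + E 0"
  "B (Suc t) = 1\<^sub>m k - \<beta> \<cdot>\<^sub>m (Linv * G t * Linv) + E (Suc t)"
  unfolding B_def by simp_all

lemma G_eq: "G t = minv (B t)"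
  by (cases t) (simp_all add: B_def minv_Lfst)

lemma spec_norm_Z_le:
  "spec_norm (Z t) \<le> (1/32) * (lam (k - 1) - 2 * sqrt \<beta>) * sigma_min (P t)"
proof -
  have "0 \<le> sigma_min (P t)"
    using sigma_min_nonneg[of "P t"] dk by simp
  then have "cos (theta_k (Ufst U k) (X t)) \<le> sigma_min (P t)"
    unfolding theta_k_def P_def by (rule cos_arccos_le)
  then have "(1/32) * (lam (k - 1) - 2 * sqrt \<beta>) * cos (theta_k (Ufst U k) (X t))
      \<le> (1/32) * (lam (k - 1) - 2 * sqrt \<beta>) * sigma_min (P t)"
    using beta_gap by (intro mult_left_mono) auto
  then show ?thesis
    using pert_fst unfolding Z_def by (meson order_trans)
qed

lemma E_norm_le:
  assumes P: "det (P t) \<noteq> 0" and v: "v \<in> carrier_vec k"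
  shows "vnorm (E t *\<^sub>v v) \<le> c_pert * vnorm v"
proof -
  define a where "a = (1/32) * (lam (k - 1) - 2 * sqrt \<beta>)"
  have a: "0 \<le> a"
    unfolding a_def using beta_gap by simp
  note Pinv = minv_inverse[OF P_carrier P]
  have w: "minv (P t) *\<^sub>v v \<in> carrier_vec k"
    using Pinv(1) v by simp
  have "E t *\<^sub>v v = (Linv * Z t) *\<^sub>v (minv (P t) *\<^sub>v v)"
    unfolding E_eq using Pinv(1) v by (intro assoc_mult_mat_vec[of _ k k _ k]) auto
  also have "\<dots> = Linv *\<^sub>v (Z t *\<^sub>v (minv (P t) *\<^sub>v v))"
    using w by (intro assoc_mult_mat_vec[of _ k k _ k]) (auto simp: Linv_def)
  finally have "vnorm (E t *\<^sub>v v) \<le> (1 / lam (k - 1)) * vnorm (Z t *\<^sub>v (minv (P t) *\<^sub>v v))"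
    using Linv_norm_le[OF mult_mat_vec_carrier[OF Z_carrier w]] by simp
  also have "\<dots> \<le> (1 / lam (k - 1)) * (a * vnorm v)"
    using vnorm_mult_minv_le[OF P_carrier P Z_carrier a spec_norm_Z_le[folded a_def] v] lam_k_pos
    by (simp add: divide_right_mono)
  also have "\<dots> = c_pert * vnorm v"
    unfolding c_pert_def a_def by simp
  finally show ?thesis .
qed

lemma det_P0: "det (P 0) \<noteq> 0"
proof -
  define \<sigma> where "\<sigma> = sigma_min (P 0)"
  have "0 \<le> \<sigma>"
    unfolding \<sigma>_def using sigma_min_nonneg[of "P 0"] dk by simp
  moreover have "0 < cos (arccos \<sigma>)"
    using cos0 unfolding \<sigma>_def theta_k_def P_def .
  ultimately have "0 < \<sigma>"
    by (rule pos_if_cos_arccos_pos)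
  moreover have "\<forall>v\<in>carrier_vec k. \<sigma> * vnorm v \<le> vnorm (P 0 *\<^sub>v v)"
    unfolding \<sigma>_def using sigma_min_mult_vnorm_le[of _ "P 0"] by simp
  ultimately show ?thesis
    by (rule det_nonzero_if_bounded_below[OF P_carrier])
qed

lemma B_0_bounded_below:
  assumes P0: "det (P 0) \<noteq> 0" and v: "v \<in> carrier_vec k"
  shows "(1 / g_bound) * vnorm v \<le> vnorm (B 0 *\<^sub>v v)"
proof -
  have E0: "E 0 \<in> carrier_mat k k"
    using E_carrier[OF P0] .
  have "B 0 *\<^sub>v v = (1/2) \<cdot>\<^sub>v v + E 0 *\<^sub>v v"
    unfolding B_simps using E0 v by (subst add_mult_distrib_mat_vec[of _ k k]) auto
  moreover have "(1/2) * vnorm v - c_pert * vnorm v \<le> vnorm ((1/2) \<cdot>\<^sub>v v) - vnorm (E 0 *\<^sub>v v)"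
    using E_norm_le[OF P0 v] by (simp add: vnorm_smult)
  moreover have "vnorm ((1/2) \<cdot>\<^sub>v v) - vnorm (E 0 *\<^sub>v v) \<le> vnorm ((1/2) \<cdot>\<^sub>v v + E 0 *\<^sub>v v)"
    using E0 v by (intro vnorm_add_ge) simp
  ultimately show ?thesis
    unfolding inverse_g_bound by (simp add: left_diff_distrib)
qed

lemma momentum_norm_le:
  assumes G: "G t \<in> carrier_mat k k"
    and G_le: "\<forall>v\<in>carrier_vec k. vnorm (G t *\<^sub>v v) \<le> g_bound * vnorm v"
    and v: "v \<in> carrier_vec k"
  shows "\<beta> * vnorm ((Linv * G t * Linv) *\<^sub>v v) \<le> (1/2) * vnorm v"
proof -
  have Lv: "Linv *\<^sub>v v \<in> carrier_vec k"
    using Linv_carrier v by (rule mult_mat_vec_carrier)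
  have "(Linv * G t * Linv) *\<^sub>v v = (Linv * G t) *\<^sub>v (Linv *\<^sub>v v)"
    using mult_carrier_mat[OF Linv_carrier G] Linv_carrier v by (rule assoc_mult_mat_vec)
  also have "\<dots> = Linv *\<^sub>v (G t *\<^sub>v (Linv *\<^sub>v v))"
    using Linv_carrier G Lv by (rule assoc_mult_mat_vec)
  finally have "vnorm ((Linv * G t * Linv) *\<^sub>v v) \<le> (1 / lam (k - 1)) * vnorm (G t *\<^sub>v (Linv *\<^sub>v v))"
    using Linv_norm_le[OF mult_mat_vec_carrier[OF G Lv]] by simp
  also have "\<dots> \<le> (1 / lam (k - 1)) * (g_bound * vnorm (Linv *\<^sub>v v))"
    using G_le Lv lam_k_pos by (intro mult_left_mono) auto
  also have "\<dots> \<le> (1 / lam (k - 1)) * (g_bound * ((1 / lam (k - 1)) * vnorm v))"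
    using Linv_norm_le[OF v] g_bound_pos lam_k_pos by (intro mult_left_mono) auto
  also have "\<dots> = g_bound / lam (k - 1)^2 * vnorm v"
    by (simp add: power2_eq_square)
  finally have "\<beta> * vnorm ((Linv * G t * Linv) *\<^sub>v v) \<le> \<beta> * (g_bound / lam (k - 1)^2 * vnorm v)"
    by (rule mult_left_mono) (use beta_pos in simp)
  also have "\<dots> = \<beta> * g_bound / lam (k - 1)^2 * vnorm v"
    by simp
  also have "\<dots> \<le> (1/2) * vnorm v"
    using beta_g_bound by (rule mult_right_mono) simp
  finally show ?thesis .
qed

lemma B_Suc_bounded_below:
  assumes P: "det (P (Suc t)) \<noteq> 0" and G: "G t \<in> carrier_mat k k"
    and G_le: "\<forall>v\<in>carrier_vec k. vnorm (G t *\<^sub>v v) \<le> g_bound * vnorm v"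
    and v: "v \<in> carrier_vec k"
  shows "(1 / g_bound) * vnorm v \<le> vnorm (B (Suc t) *\<^sub>v v)"
proof -
  define M where "M = Linv * G t * Linv"
  have M: "M \<in> carrier_mat k k"
    unfolding M_def using Linv_carrier G by (intro mult_carrier_mat)
  have E: "E (Suc t) \<in> carrier_mat k k"
    using E_carrier[OF P] .
  have Bv: "B (Suc t) *\<^sub>v v = (v - \<beta> \<cdot>\<^sub>v (M *\<^sub>v v)) + E (Suc t) *\<^sub>v v"
    unfolding B_simps M_def[symmetric] using M E v
    by (simp add: add_mult_distrib_mat_vec[of _ k k] minus_mult_distrib_mat_vec[of _ k k]
        minus_carrier_mat smult_mult_mat_vec)
  have "(1 / g_bound) * vnorm v \<le> vnorm v - vnorm (\<beta> \<cdot>\<^sub>v (M *\<^sub>v v)) - vnorm (E (Suc t) *\<^sub>v v)"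
    using momentum_norm_le[OF G G_le v] E_norm_le[OF P v] beta_pos
    unfolding inverse_g_bound M_def[symmetric] by (simp add: vnorm_smult algebra_simps)
  moreover have "vnorm v - vnorm (\<beta> \<cdot>\<^sub>v (M *\<^sub>v v)) \<le> vnorm (v - \<beta> \<cdot>\<^sub>v (M *\<^sub>v v))"
    using M v by (simp add: vnorm_diff_ge)
  moreover have "vnorm (v - \<beta> \<cdot>\<^sub>v (M *\<^sub>v v)) - vnorm (E (Suc t) *\<^sub>v v) \<le> vnorm (B (Suc t) *\<^sub>v v)"
    unfolding Bv using E M v by (simp add: vnorm_add_ge)
  ultimately show ?thesis
    by linarith
qed

lemma G_bounded_if_B_bounded_below:
  assumes B: "B t \<in> carrier_mat k k"
    and below: "\<forall>v\<in>carrier_vec k. (1 / g_bound) * vnorm v \<le> vnorm (B t *\<^sub>v v)"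
  shows "det (B t) \<noteq> 0" "G t \<in> carrier_mat k k" "G t * B t = 1\<^sub>m k"
    "\<forall>v\<in>carrier_vec k. vnorm (G t *\<^sub>v v) \<le> g_bound * vnorm v"
proof -
  have g: "0 < 1 / g_bound"
    using g_bound_pos by simp
  show det: "det (B t) \<noteq> 0"
    by (rule det_nonzero_if_bounded_below[OF B g below])
  show "G t \<in> carrier_mat k k" "G t * B t = 1\<^sub>m k"
    unfolding G_eq using minv_inverse[OF B det] by simp_all
  show "\<forall>v\<in>carrier_vec k. vnorm (G t *\<^sub>v v) \<le> g_bound * vnorm v"
    unfolding G_eq using minv_norm_le[OF B g below] by simp
qed

lemma P_R_first_factor:
  assumes P0: "det (P 0) \<noteq> 0"
  shows "P 1 * R 1 = Lfst lam k * B 0 * P 0"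
proof -
  note Pinv = minv_inverse[OF P_carrier P0]
  have "Lfst lam k * B 0 * P 0 = (1/2) \<cdot>\<^sub>m (Lfst lam k * P 0) + Z 0"
    using carrier_matD[OF Pinv(1)]
    by (simp add: B_simps E_eq mat_algebra_dims mult_one_left_dims mult_one_right_dims
        mult_cancel_left_dims[OF Lfst_Linv(1)] Pinv(3))
  then show ?thesis
    unfolding P_R_first ..
qed

lemma P_R_step_factor:
  assumes P: "det (P (Suc t)) \<noteq> 0" and R: "det (R (Suc t)) \<noteq> 0"
    and G: "G t \<in> carrier_mat k k" and GB: "G t * B t = 1\<^sub>m k" and B: "B t \<in> carrier_mat k k"
    and PR: "P (Suc t) * R (Suc t) = Lfst lam k * B t * P t"
  shows "P (Suc (Suc t)) * R (Suc (Suc t)) = Lfst lam k * B (Suc t) * P (Suc t)"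
proof -
  note Pinv = minv_inverse[OF P_carrier P] and Rinv = minv_inverse[OF R_carrier R]
  note dims = carrier_matD[OF Pinv(1)] carrier_matD[OF Rinv(1)] carrier_matD[OF G] carrier_matD[OF B]
  have "P (Suc t) = P (Suc t) * R (Suc t) * minv (R (Suc t))"
    using dims by (simp add: mat_algebra_dims Rinv(2) mult_one_right_dims)
  also have "\<dots> = Lfst lam k * (B t * (P t * minv (R (Suc t))))"
    unfolding PR using dims by (simp add: mat_algebra_dims)
  finally have "G t * (Linv * P (Suc t)) = P t * minv (R (Suc t))"
    using dims by (simp add: mult_cancel_left_dims[OF Lfst_Linv(2)] mult_cancel_left_dims[OF GB])
  then have "Lfst lam k * B (Suc t) * P (Suc t)
      = Lfst lam k * P (Suc t) - \<beta> \<cdot>\<^sub>m (P t * minv (R (Suc t))) + Z (Suc t)"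
    using dims by (simp add: B_simps E_eq mat_algebra_dims mult_one_left_dims mult_one_right_dims
        mult_cancel_left_dims[OF Lfst_Linv(1)] Pinv(3))
  then show ?thesis
    using P_R_step[OF Rinv(1)] by simp
qed

lemma det_P_R_Suc:
  assumes "det (P t) \<noteq> 0" "det (B t) \<noteq> 0" "B t \<in> carrier_mat k k"
    and PR: "P (Suc t) * R (Suc t) = Lfst lam k * B t * P t"
  shows "det (P (Suc t)) \<noteq> 0" "det (R (Suc t)) \<noteq> 0"
proof -
  have "det (P (Suc t)) * det (R (Suc t)) = det (P (Suc t) * R (Suc t))"
    by (rule det_mult[OF P_carrier R_carrier, symmetric])
  also have "\<dots> = det (Lfst lam k) * det (B t) * det (P t)"
    unfolding PR using det_mult[OF mult_carrier_mat[OF Lfst_carrier assms(3)] P_carrier]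
      det_mult[OF Lfst_carrier assms(3)]
    by simp
  finally have "det (P (Suc t)) * det (R (Suc t)) = det (Lfst lam k) * det (B t) * det (P t)" .
  then show "det (P (Suc t)) \<noteq> 0" "det (R (Suc t)) \<noteq> 0"
    using assms(1,2) det_Lfst by auto
qed

lemma iteration_invariant:
  "det (P t) \<noteq> 0 \<and> B t \<in> carrier_mat k k \<and> det (B t) \<noteq> 0 \<and> G t \<in> carrier_mat k k
   \<and> G t * B t = 1\<^sub>m k \<and> (\<forall>v\<in>carrier_vec k. vnorm (G t *\<^sub>v v) \<le> g_bound * vnorm v)
   \<and> P (Suc t) * R (Suc t) = Lfst lam k * B t * P t"
proof (induction t)
  case 0
  have B: "B 0 \<in> carrier_mat k k"
    unfolding B_simps using E_carrier[OF det_P0] by (rule add_carrier_mat)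
  have "\<forall>v\<in>carrier_vec k. (1 / g_bound) * vnorm v \<le> vnorm (B 0 *\<^sub>v v)"
    using B_0_bounded_below[OF det_P0] by blast
  note G = G_bounded_if_B_bounded_below[OF B this]
  show ?case
    using det_P0 B G P_R_first_factor[OF det_P0, unfolded One_nat_def] by (intro conjI)
next
  case (Suc t)
  have IH: "det (P t) \<noteq> 0" "B t \<in> carrier_mat k k" "det (B t) \<noteq> 0" "G t \<in> carrier_mat k k"
    "G t * B t = 1\<^sub>m k" "\<forall>v\<in>carrier_vec k. vnorm (G t *\<^sub>v v) \<le> g_bound * vnorm v"
    "P (Suc t) * R (Suc t) = Lfst lam k * B t * P t"
    using Suc.IH by simp_all
  note PR = det_P_R_Suc[OF IH(1,3,2,7)]
  have B: "B (Suc t) \<in> carrier_mat k k"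
    unfolding B_simps using E_carrier[OF PR(1)] by (rule add_carrier_mat)
  have "\<forall>v\<in>carrier_vec k. (1 / g_bound) * vnorm v \<le> vnorm (B (Suc t) *\<^sub>v v)"
    using B_Suc_bounded_below[OF PR(1) IH(4,6)] by blast
  note G = G_bounded_if_B_bounded_below[OF B this]
  show ?case
    using PR(1) B G P_R_step_factor[OF PR IH(4,5,2,7)] by (intro conjI)
qed

lemma det_P: "det (P t) \<noteq> 0"
  and B_carrier: "B t \<in> carrier_mat k k"
  and det_B: "det (B t) \<noteq> 0"
  and G_carrier: "G t \<in> carrier_mat k k"
  and G_B: "G t * B t = 1\<^sub>m k"
  and P_R_factor: "P (Suc t) * R (Suc t) = Lfst lam k * B t * P t"
  using iteration_invariant[of t] by simp_all

lemma det_R: "det (R (Suc t)) \<noteq> 0"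
  using det_P_R_Suc(2)[OF det_P det_B B_carrier P_R_factor] .

lemmas Pinv = minv_inverse[OF P_carrier det_P]
lemmas Rinv = minv_inverse[OF R_carrier det_R]
lemmas Pinv_dims [simp] = carrier_matD[OF Pinv(1)]
lemmas Rinv_dims [simp] = carrier_matD[OF Rinv(1)]
lemmas B_dims [simp] = carrier_matD[OF B_carrier]

(* Keep C and G folded; their recursions enter only through C_Suc and G_eq. *)
declare Cm.simps(2) [simp del] Gm.simps(2) [simp del]

lemma C_Suc: "C (Suc t) = Lfst lam k * B t * C t"
  using minv_eqI[OF G_carrier B_carrier G_B] by (simp add: Cm.simps)

lemma C_carrier: "C t \<in> carrier_mat k k"
proof (induction t)
  case (Suc t)
  show ?case
    unfolding C_Suc using Lfst_carrier B_carrier Suc by (intro mult_carrier_mat)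
qed simp

lemmas C_dims [simp] = carrier_matD[OF C_carrier]

lemma det_C: "det (C t) \<noteq> 0"
proof (induction t)
  case (Suc t)
  have "det (C (Suc t)) = det (Lfst lam k) * det (B t) * det (C t)"
    unfolding C_Suc using det_mult[OF mult_carrier_mat[OF Lfst_carrier B_carrier] C_carrier]
      det_mult[OF Lfst_carrier B_carrier] by simp
  then show ?case
    using det_Lfst det_B Suc by simp
qed simp

lemmas Cinv = minv_inverse[OF C_carrier det_C]
lemmas Cinv_dims [simp] = carrier_matD[OF Cinv(1)]

abbreviation Psi :: "nat \<Rightarrow> real mat" where "Psi \<equiv> Psim U k X Xi"

lemma Psi_eq: "Psi t = W t * minv (P t)"
  unfolding Psim_def W_def P_def ..

definition HC :: "nat \<Rightarrow> real mat" where "HC t = Q t * minv (P t) * C t"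

lemma HC_carrier: "HC t \<in> carrier_mat (d - k) k"
  unfolding HC_def by (rule carrier_matI) simp_all

lemmas HC_dims [simp] = carrier_matD[OF HC_carrier]

lemma Psi_C_carrier: "Psi t * C t \<in> carrier_mat (d - k) k"
  unfolding Psi_eq by (rule carrier_matI) simp_all

lemma HC_Suc_eq: "HC (Suc t) = Q (Suc t) * R (Suc t) * minv (P t) * C t"
proof -
  have "Lfst lam k * B t = P (Suc t) * R (Suc t) * minv (P t)"
    unfolding P_R_factor by (simp add: mat_algebra_dims Pinv(2) mult_one_right_dims)
  then show ?thesis
    unfolding HC_def C_Suc
    by (simp add: mat_algebra_dims mult_cancel_left_dims[OF Pinv(3)])
qed

lemma HC_first: "HC 1 = (1/2) \<cdot>\<^sub>m (Lrest lam d k * HC 0) + Psi 0 * C 0"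
  using HC_Suc_eq[of 0] unfolding One_nat_def[symmetric] Q_R_first HC_def Psi_eq
  by (simp add: mat_algebra_dims)

lemma HC_step: "HC (Suc (Suc t)) = Lrest lam d k * HC (Suc t) - \<beta> \<cdot>\<^sub>m HC t + Psi (Suc t) * C (Suc t)"
proof -
  have "C (Suc t) = P (Suc t) * R (Suc t) * minv (P t) * C t"
    unfolding C_Suc P_R_factor by (simp add: mat_algebra_dims mult_one_left_dims Pinv(2))
  then have "minv (R (Suc t)) * (minv (P (Suc t)) * C (Suc t)) = minv (P t) * C t"
    by (simp add: mat_algebra_dims mult_cancel_left_dims[OF Pinv(3)] mult_cancel_left_dims[OF Rinv(3)])
  then show ?thesis
    unfolding HC_Suc_eq[of "Suc t"] unfolding Q_R_step[OF Rinv(1)] HC_def Psi_eq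
    by (simp add: mat_algebra_dims)
qed

lemma H_closed_form:
  "Hm U k X t = poly_mat (d - k) (pP \<beta> t) (Lrest lam d k) * Hm U k X 0 * minv (C t)
      + msum (d - k) k (\<lambda>s. poly_mat (d - k) (qP \<beta> s) (Lrest lam d k) * Psi (t - 1 - s)
            * C (t - 1 - s) * minv (C t)) t"
proof -
  let ?p = "\<lambda>s. poly_mat (d - k) (pP \<beta> s) (Lrest lam d k)"
  let ?q = "\<lambda>s. poly_mat (d - k) (qP \<beta> s) (Lrest lam d k)"
  let ?F = "\<lambda>s. ?q s * (Psi (t - 1 - s) * C (t - 1 - s))"
  have H_eq: "Hm U k X s = Q s * minv (P s)" for s
    unfolding Hm_def Q_def P_def ..
  have HC_0: "HC 0 = Hm U k X 0"
    unfolding HC_def H_eq by (simp add: mult_one_right_dims)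
  have "HC t = ?p t * HC 0 + msum (d - k) k ?F t"
    using diag_three_term_recurrence_poly_mat[OF HC_carrier Psi_C_carrier
        HC_first[unfolded Lrest_def] HC_step[unfolded Lrest_def]]
    unfolding Lrest_def .
  then have "HC t * minv (C t) = ?p t * HC 0 * minv (C t) + msum (d - k) k ?F t * minv (C t)"
    by (simp add: add_mult_distrib_dims)
  also have "msum (d - k) k ?F t * minv (C t) = msum (d - k) k (\<lambda>s. ?F s * minv (C t)) t"
    by (intro msum_mult_right carrier_matI) simp_all
  also have "(\<lambda>s. ?F s * minv (C t)) = (\<lambda>s. ?q s * Psi (t - 1 - s) * C (t - 1 - s) * minv (C t))"
    unfolding Psi_eq by (simp add: mult_assoc_dims)
  also have "HC t * minv (C t) = Hm U k X t"
    unfolding HC_def H_eq using Cinv(2) by (simp add: mult_assoc_dims mult_one_right_dims)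
  finally show ?thesis
    unfolding HC_0 .
qed

end

theorem lemma2:
  fixes d k :: nat and \<epsilon> \<beta> :: real and A U :: "real mat" and lam :: "nat \<Rightarrow> real"
    and X R Xi :: "nat \<Rightarrow> real mat"
  assumes dk: "d > k" "k \<ge> 1"
    and eps: "0 < \<epsilon>" "\<epsilon> < 1"
    and A_carrier: "A \<in> carrier_mat d d"
    and A_sym: "transpose_mat A = A"
    and A_psd: "\<forall>x \<in> carrier_vec d. x \<bullet> (A *\<^sub>v x) \<ge> 0"
    and U_carrier: "U \<in> carrier_mat d d"
    and U_orth: "transpose_mat U * U = 1\<^sub>m d"
    and U_eig: "\<forall>i < d. A *\<^sub>v col U i = lam i \<cdot>\<^sub>v col U i"
    and lam_sorted: "\<forall>i j. i \<le> j \<longrightarrow> j < d \<longrightarrow> lam j \<le> lam i"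
    and lam_nonneg: "lam (d - 1) \<ge> 0"
    and gap: "lam (k - 1) > lam k"
    and beta_pos: "\<beta> > 0"
    and beta_gap: "lam (k - 1) > 2 * sqrt \<beta>" "2 * sqrt \<beta> \<ge> lam k"
    and X0: "X 0 \<in> stiefel d k"
    and cos0: "cos (theta_k (Ufst U k) (X 0)) > 0"
    and Xi_carrier: "\<forall>t. Xi t \<in> carrier_mat d k"
    and QR1: "is_QR ((1/2) \<cdot>\<^sub>m (A * X 0) + Xi 0) (X 1) (R 1)"
    and QRstep: "\<forall>t. is_QR (A * X (Suc t) - \<beta> \<cdot>\<^sub>m (X t * minv (R (Suc t))) + Xi (Suc t))
                           (X (Suc (Suc t))) (R (Suc (Suc t)))"
    and pert_rest: "\<forall>t. spec_norm (transpose_mat (Urest U k) * Xi t)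
                         \<le> (1/32) * (lam (k - 1) - 2 * sqrt \<beta>) * \<epsilon>"
    and pert_fst: "\<forall>t. spec_norm (transpose_mat (Ufst U k) * Xi t)
                         \<le> (1/32) * (lam (k - 1) - 2 * sqrt \<beta>) * cos (theta_k (Ufst U k) (X t))"
  shows "\<forall>t. Hm U k X t =
      poly_mat (d - k) (pP \<beta> t) (Lrest lam d k) * Hm U k X 0 * minv (Cm U lam k \<beta> X Xi t)
      + msum (d - k) k
          (\<lambda>s. poly_mat (d - k) (qP \<beta> s) (Lrest lam d k) * Psim U k X Xi (t - 1 - s)
               * Cm U lam k \<beta> X Xi (t - 1 - s) * minv (Cm U lam k \<beta> X Xi t)) t"
proof -
  \<comment> \<open>The closed form is an exact algebraic identity once every inverse in it exists; that
    needs only \<open>cos \<theta>\<^sub>k(U\<^sub>k, X\<^sub>0) > 0\<close>, the bound on \<open>U\<^sub>k\<^sup>T\<Xi>\<^sub>t\<close> and \<open>\<lambda>\<^sub>k > 2\<surd>\<beta>\<close>.\<close>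
  have X0_carrier: "X 0 \<in> carrier_mat d k"
    using X0 unfolding stiefel_def by simp
  interpret anpm d k \<beta> A U lam X R Xi
    using dk A_carrier A_sym U_carrier U_eig lam_sorted beta_pos beta_gap(1) X0_carrier cos0
      Xi_carrier QR1 QRstep pert_fst
    by unfold_locales
  show ?thesis
    using H_closed_form by blast
qed

end
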